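(* Let $\mathbf{L}=\langle L,\leq,0,1\rangle$ be a totally ordered complete lattice and let $\mathcal{D}_1,\mathcal{D}_2$ be ranked data tables on the same relation scheme $R$. Then $\mathcal{D}_1\equiv\mathcal{D}_2$ if and only if there is an order isomorphism $f\colon L(\mathcal{D}_1)\to L(\mathcal{D}_2)$ such that $\mathcal{D}_1\circ f=\mathcal{D}_2$.
   Context: A relation scheme $R$ is a finite set of attributes, each with a (at most countable) set of admissible values; a tuple on $R$ assigns to each attribute of $R$ an admissible value; $\mathrm{Tupl}(R)$ is the set of all tuples on $R$. A ranked data table (RDT) on $R$ is a map $\mathcal{D}\colon\mathrm{Tupl}(R)\to L$ with $\{r;\ \mathcal{D}(r)>0\}$ finite. Its range is $L(\mathcal{D})=\{\mathcal{D}(r);\ r\in\mathrm{Tupl}(R)\}\subseteq L$. For an RDT $\mathcal{D}$ and $r\in\mathrm{Tupl}(R)$, $\mathcal{U}(\mathcal{D},r)=\{r'\in\mathrm{Tupl}(R);\ \mathcal{D}(r')\geq\mathcal{D}(r)\}$; $\mathcal{D}_1\sqsubseteq\mathcal{D}_2$ means $\mathcal{U}(\mathcal{D}_1,r)\subseteq\mathcal{U}(\mathcal{D}_2,r)$ for all $r$; $\mathcal{D}_1\equiv\mathcal{D}_2$ (ordinal equivalence) means $\mathcal{D}_1\sqsubseteq\mathcal{D}_2$ and $\mathcal{D}_2\sqsubseteq\mathcal{D}_1$. For $L_1,L_2\subseteq L$, a map $f\colon L_1\to L_2$ is an order isomorphism if it is surjective and satisfies $a\leq b \iff f(a)\leq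 f(b)$ for all $a,b\in L_1$. $\mathcal{D}\circ f$ denotes the map $r\mapsto f(\mathcal{D}(r))$. *)

theory Defs
  imports Main "HOL-Library.Countable_Set"
begin

definition relation_scheme :: "'a set \<Rightarrow> ('a \<Rightarrow> 'v set) \<Rightarrow> bool" where
  "relation_scheme R Dom \<longleftrightarrow> finite R \<and> (\<forall>a\<in>R. countable (Dom a))"

definition Tupl :: "'a set \<Rightarrow> ('a \<Rightarrow> 'v set) \<Rightarrow> ('a \<Rightarrow> 'v) set" where
  "Tupl R Dom = {r. (\<forall>a\<in>R. r a \<in> Dom a) \<and> (\<forall>a. a \<notin> R \<longrightarrow> r a = undefined)}"

text \<open>Ranked data table: only its values on Tupl R Dom matter; finitely many tuples
 have rank > 0 (0 = bot of the complete lattice).\<close>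
definition rdt :: "'a set \<Rightarrow> ('a \<Rightarrow> 'v set) \<Rightarrow> (('a \<Rightarrow> 'v) \<Rightarrow> 'l::complete_linorder) \<Rightarrow> bool" where
  "rdt R Dom D \<longleftrightarrow> finite {r \<in> Tupl R Dom. D r > bot}"

definition rng :: "'a set \<Rightarrow> ('a \<Rightarrow> 'v set) \<Rightarrow> (('a \<Rightarrow> 'v) \<Rightarrow> 'l) \<Rightarrow> 'l set" where
  "rng R Dom D = D ` Tupl R Dom"

definition U :: "'a set \<Rightarrow> ('a \<Rightarrow> 'v set) \<Rightarrow> (('a \<Rightarrow> 'v) \<Rightarrow> 'l::complete_linorder) \<Rightarrow> ('a \<Rightarrow> 'v) \<Rightarrow> ('a \<Rightarrow> 'v) set" where
  "U R Dom D r = {r' \<in> Tupl R Dom. D r' \<ge> D r}"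

definition rdt_le :: "'a set \<Rightarrow> ('a \<Rightarrow> 'v set) \<Rightarrow> (('a \<Rightarrow> 'v) \<Rightarrow> 'l::complete_linorder) \<Rightarrow> (('a \<Rightarrow> 'v) \<Rightarrow> 'l) \<Rightarrow> bool" where
  "rdt_le R Dom D1 D2 \<longleftrightarrow> (\<forall>r\<in>Tupl R Dom. U R Dom D1 r \<subseteq> U R Dom D2 r)"

definition ord_equiv :: "'a set \<Rightarrow> ('a \<Rightarrow> 'v set) \<Rightarrow> (('a \<Rightarrow> 'v) \<Rightarrow> 'l::complete_linorder) \<Rightarrow> (('a \<Rightarrow> 'v) \<Rightarrow> 'l) \<Rightarrow> bool" where
  "ord_equiv R Dom D1 D2 \<longleftrightarrow> rdt_le R Dom D1 D2 \<and> rdt_le R Dom D2 D1"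

definition order_iso :: "'l::complete_linorder set \<Rightarrow> 'l set \<Rightarrow> ('l \<Rightarrow> 'l) \<Rightarrow> bool" where
  "order_iso L1 L2 f \<longleftrightarrow> f ` L1 = L2 \<and> (\<forall>a\<in>L1. \<forall>b\<in>L1. a \<le> b \<longleftrightarrow> f a \<le> f b)"

end

theory Submission
  imports Defs
begin

text \<open>Both sides of the equivalence say that D1 and D2 induce the same preorder on the tuples:
  ordinal equivalence by unfolding the upper sets, and a factorisation D2 = f \<circ> D1 through an
  order isomorphism because equal D1-ranks then force equal D2-ranks, so D2 is a function of D1.
  Neither the relation scheme nor the finiteness of the tables plays a role.\<close>

lemma ord_equiv_iff_same_order:
  "ord_equiv R Dom D1 D2 \<longleftrightarrow>
   (\<forall>r\<in>Tupl R Dom. \<forall>r'\<in>Tupl R Dom. D1 r \<le> D1 r' \<longleftrightarrow> D2 r \<le> D2 r')"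
  unfolding ord_equiv_def rdt_le_def U_def by blast

lemma same_order_factorization:
  fixes g :: "'b \<Rightarrow> 'c::order" and h :: "'b \<Rightarrow> 'd::order"
  assumes same_order: "\<forall>x\<in>T. \<forall>y\<in>T. g x \<le> g y \<longleftrightarrow> h x \<le> h y"
  obtains f where "\<forall>x\<in>T. f (g x) = h x"
proof
  define f where "f a = h (SOME x. x \<in> T \<and> g x = a)" for a
  show "\<forall>x\<in>T. f (g x) = h x"
  proof
    fix x assume x: "x \<in> T"
    define y where "y = (SOME y. y \<in> T \<and> g y = g x)"
    have y: "y \<in> T" "g y = g x"
      unfolding y_def using someI_ex[of "\<lambda>y. y \<in> T \<and> g y = g x"] x by blast+
    have "h y = h x"
      using same_order x y by (metis order_refl order_antisym)
    thus "f (g x) = h x" by (simp add: f_def y_def)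
  qed
qed

lemma order_iso_factorization_iff_same_order:
  fixes g h :: "'b \<Rightarrow> 'l::complete_linorder"
  shows "(\<exists>f. order_iso (g ` T) (h ` T) f \<and> (\<forall>x\<in>T. f (g x) = h x)) \<longleftrightarrow>
         (\<forall>x\<in>T. \<forall>y\<in>T. g x \<le> g y \<longleftrightarrow> h x \<le> h y)"
proof
  assume "\<exists>f. order_iso (g ` T) (h ` T) f \<and> (\<forall>x\<in>T. f (g x) = h x)"
  then obtain f where "order_iso (g ` T) (h ` T) f" and "\<forall>x\<in>T. f (g x) = h x"
    by blast
  thus "\<forall>x\<in>T. \<forall>y\<in>T. g x \<le> g y \<longleftrightarrow> h x \<le> h y"
    unfolding order_iso_def by (metis image_eqI)
next
  assume same_order: "\<forall>x\<in>T. \<forall>y\<in>T. g x \<le> g y \<longleftrightarrow> h x \<le> h y"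
  then obtain f where f: "\<forall>x\<in>T. f (g x) = h x"
    by (rule same_order_factorization)
  have "f ` g ` T = h ` T"
    using f by (force simp: image_image)
  moreover have "\<forall>a\<in>g ` T. \<forall>b\<in>g ` T. a \<le> b \<longleftrightarrow> f a \<le> f b"
    using f same_order by auto
  ultimately show "\<exists>f. order_iso (g ` T) (h ` T) f \<and> (\<forall>x\<in>T. f (g x) = h x)"
    using f unfolding order_iso_def by blast
qed

theorem theorem5:
  fixes R :: "'a set" and Dom :: "'a \<Rightarrow> 'v set"
    and D1 D2 :: "('a \<Rightarrow> 'v) \<Rightarrow> 'l::complete_linorder"
  assumes "relation_scheme R Dom" and "rdt R Dom D1" and "rdt R Dom D2"
  shows "ord_equiv R Dom D1 D2 \<longleftrightarrow>
    (\<exists>f. order_iso (rng R Dom D1) (rng R Dom D2) f \<and>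
         (\<forall>r\<in>Tupl R Dom. f (D1 r) = D2 r))"
  unfolding ord_equiv_iff_same_order rng_def
  by (rule order_iso_factorization_iff_same_order[symmetric])

end
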